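(* Let $n$ be even, let $0<\alpha\le 1/4$ with $m=\alpha n$ a positive integer, and let $0\le\epsilon<1/2$. Consider any randomized one-pass streaming algorithm (equivalently, any one-way protocol with public randomness) of the following form: after reading $x\in\{0,1\}^n$ it retains a memory state (message) of at most $c$ bits, and then, given this state and a matching $M$ on $[n]$ of exactly $m$ pairwise disjoint edges, it outputs an edge $\{i,j\}\in M$ together with a bit $b$. Suppose that for every $x\in\{0,1\}^n$ and every such matching $M$, the probability that $b\ne x_i\oplus x_j$ is at most $\epsilon$. Then $$c\;\ge\;\frac{1}{e\ln 2}\Big(\frac12-\epsilon\Big)\sqrt{\frac{n-1}{2\alpha}},$$ where $e$ is Euler's number; in particular $c=\Omega(\sqrt{n/\alpha})$.
   Context: $[n]=\{1,\dots,n\}$. A matching on $[n]$ is a set of unordered pairs of distinct elements of $[n]$, no two sharing an element. The randomness of the algorithm may be shared between the phase that reads $x$ and the phase that reads $M$; the error probability is over this randomness only, for each fixed input $(x,M)$. *)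

theory Defs
  imports "HOL-Probability.Probability"
begin

definition bitstrings :: "nat \<Rightarrow> (nat \<Rightarrow> bool) set" where
  "bitstrings n = {x. \<forall>i. i \<notin> {1..n} \<longrightarrow> \<not> x i}"

definition edges_on :: "nat \<Rightarrow> nat set set" where
  "edges_on n = {e. \<exists>i j. i \<in> {1..n} \<and> j \<in> {1..n} \<and> i \<noteq> j \<and> e = {i, j}}"

definition matchings :: "nat \<Rightarrow> nat \<Rightarrow> nat set set set" where
  "matchings n m = {M. M \<subseteq> edges_on n \<and> pairwise disjnt M \<and> finite M \<and> card M = m}"

end

(*
  Fix an outcome of the public randomness on which the protocol errs on at most an
  eps-fraction of the pairs (x, M).  The messages split {0,1}^n into at most 2^c fibres.
  On a fibre A, an answer ({i,j}, b) is correct for (|A| +- A^({i,j})) / 2 inputs, where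
  A^(e) = sum_{x in A} (-1)^(x_i + x_j).  Since every edge lies in the same fraction
  m / C(n,2) of the matchings, Cauchy-Schwarz bounds the average over the matchings of
  |A^(e)| at the answered edge e by sqrt (m / C(n,2)) sqrt (W A), where W A = sum_e A^(e)^2
  is the level-2 Fourier weight of A.  The level-2 inequality
  sqrt (W A) <= e |A| (ln (2^n / |A|) + 1), which follows from the Bonami hypercontractive
  inequality, and Gibbs' inequality over the fibres give sum_A sqrt (W A) <= 2 e ln 2 c 2^n,
  whence 1/2 - eps <= e ln 2 c sqrt (m / C(n,2)) = e ln 2 c sqrt (2 alpha / (n - 1)).
*)
theory Submission
  imports Defs
begin

section \<open>The Boolean cube and its characters\<close>

definition cube :: "nat set \<Rightarrow> (nat \<Rightarrow> bool) set" where
  "cube I = {x. \<forall>i. i \<notin> I \<longrightarrow> \<not> x i}"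

lemma bitstrings_eq_cube: "bitstrings n = cube {1..n}"
  unfolding bitstrings_def cube_def by simp

lemma cube_empty: "cube {} = {\<lambda>_. False}"
  by (auto simp: cube_def)

lemma cube_insert:
  assumes "i \<notin> I"
  shows "cube (insert i I) = cube I \<union> (\<lambda>x. x(i := True)) ` cube I"
proof
  show "cube (insert i I) \<subseteq> cube I \<union> (\<lambda>x. x(i := True)) ` cube I"
  proof
    fix y assume y: "y \<in> cube (insert i I)"
    show "y \<in> cube I \<union> (\<lambda>x. x(i := True)) ` cube I"
    proof (cases "y i")
      case True
      then have "y = (y(i := False))(i := True)" and "y(i := False) \<in> cube I"
        using y by (auto simp: cube_def fun_upd_idem)
      then show ?thesis by blast
    next
      case False
      then show ?thesis using y by (auto simp: cube_def)
    qed
  qed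
qed (use assms in \<open>auto simp: cube_def\<close>)

lemma finite_cube: "finite I \<Longrightarrow> finite (cube I)"
  by (induction I rule: finite_induct) (simp_all add: cube_empty cube_insert)

lemma sum_cube_insert:
  assumes "finite I" "i \<notin> I"
  shows "(\<Sum>y\<in>cube (insert i I). h y) = (\<Sum>x\<in>cube I. h x + h (x(i := True)))"
proof -
  have inj: "inj_on (\<lambda>x. x(i := True)) (cube I)"
    using assms(2) by (auto simp: inj_on_def cube_def fun_eq_iff)
  have "(\<Sum>y\<in>cube (insert i I). h y) = (\<Sum>y\<in>cube I. h y) + (\<Sum>y\<in>(\<lambda>x. x(i := True)) ` cube I. h y)"
    unfolding cube_insert[OF assms(2)] using assms
    by (intro sum.union_disjoint) (auto simp: finite_cube, auto simp: cube_def)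
  also have "(\<Sum>y\<in>(\<lambda>x. x(i := True)) ` cube I. h y) = (\<Sum>x\<in>cube I. h (x(i := True)))"
    using sum.reindex[OF inj] by simp
  finally show ?thesis by (simp add: sum.distrib)
qed

lemma card_cube: "finite I \<Longrightarrow> card (cube I) = 2 ^ card I"
proof (induction I rule: finite_induct)
  case (insert i I)
  then show ?case
    using sum_cube_insert[OF insert(1,2), of "\<lambda>_. 1::nat"] by simp
qed (simp add: cube_empty)

definition bool_sign :: "bool \<Rightarrow> real" where
  "bool_sign b = (if b then -1 else 1)"

definition character :: "nat set \<Rightarrow> (nat \<Rightarrow> bool) \<Rightarrow> real" where
  "character S x = (\<Prod>i\<in>S. bool_sign (x i))"

lemma character_insert:
  "finite S \<Longrightarrow> i \<notin> S \<Longrightarrow> character (insert i S) x = bool_sign (x i) * character S x"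
  by (simp add: character_def)

lemma character_upd: "i \<notin> S \<Longrightarrow> character S (x(i := v)) = character S x"
  unfolding character_def by (rule prod.cong) auto

lemma sum_cube_character_eq_0:
  assumes "finite I" "S \<subseteq> I" "S \<noteq> {}"
  shows "(\<Sum>x\<in>cube I. character S x) = 0"
proof -
  obtain i where i: "i \<in> S" using assms(3) by blast
  have I: "I = insert i (I - {i})" using i assms(2) by auto
  have S: "character S x = bool_sign (x i) * character (S - {i}) x" for x
    using character_insert[of "S - {i}" i x] i finite_subset[OF assms(2,1)] by (simp add: insert_absorb)
  have "(\<Sum>x\<in>cube I. character S x) = (\<Sum>x\<in>cube (I - {i}). character S x + character S (x(i := True)))"
    by (subst I) (rule sum_cube_insert; use assms(1) in simp)
  also have "\<dots> = 0"
    by (intro sum.neutral) (auto simp: S character_upd cube_def bool_sign_def)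
  finally show ?thesis .
qed

section \<open>Hypercontractivity\<close>

lemma binomial_Suc_real:
  "k \<le> n \<Longrightarrow> real (n choose Suc k) * real (Suc k) = real (n choose k) * (real n - real k)"
  using binomial_absorption[of k n] binomial_absorb_comp[of n k]
  by (metis (mono_tags, lifting) mult.commute of_nat_diff of_nat_mult)

lemma binomial_double_le:
  assumes "j \<le> k"
  shows "real (2*k choose 2*j) \<le> real (k choose j) * (2 * real k - 1) ^ j"
  using assms
proof (induction j)
  case (Suc j)
  define K where "K = 2 * real k - 1"
  have jk: "j < k" using Suc by simp
  then have "1 \<le> K" and "2 * real k - 2 * real j - 1 \<le> (2 * real j + 1) * K"
    unfolding K_def by (simp_all add: algebra_simps)
  then have step: "2 * (real k - real j) * (2 * real k - 2 * real j - 1) \<le> 2 * (real k - real j) * ((2 * real j + 1) * K)"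
    using jk by (intro mult_left_mono) auto
  have "real (2*k choose 2 * Suc j) * ((2 * real j + 1) * (2 * real j + 2))
      = (real (2*k choose Suc (Suc (2*j))) * real (Suc (Suc (2*j)))) * (2 * real j + 1)"
    by (simp add: algebra_simps)
  also have "\<dots> = (real (2*k choose Suc (2*j)) * real (Suc (2*j))) * (2 * real k - 2 * real j - 1)"
    using binomial_Suc_real[of "Suc (2*j)" "2*k"] jk by (simp only: Suc_le_eq) (simp add: algebra_simps)
  also have "\<dots> = real (2*k choose 2*j) * (2 * (real k - real j) * (2 * real k - 2 * real j - 1))"
    using binomial_Suc_real[of "2*j" "2*k"] jk by (simp only: Suc_le_eq) (simp add: algebra_simps)
  also have "\<dots> \<le> real (k choose j) * K ^ j * (2 * (real k - real j) * ((2 * real j + 1) * K))"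
    using Suc jk step unfolding K_def by (intro mult_mono) auto
  also have "\<dots> = (real (k choose j) * (real k - real j)) * K ^ j * (2 * (2 * real j + 1) * K)"
    by (simp add: algebra_simps)
  also have "\<dots> = (real (k choose Suc j) * real (Suc j)) * K ^ j * (2 * (2 * real j + 1) * K)"
    using binomial_Suc_real[of j k] jk by simp
  also have "\<dots> = real (k choose Suc j) * K ^ Suc j * ((2 * real j + 1) * (2 * real j + 2))"
    by (simp add: algebra_simps)
  finally show ?case
    unfolding K_def by (rule mult_right_le_imp_le) (simp add: add_pos_pos)
qed simp

lemma sum_atMost_double:
  fixes h :: "nat \<Rightarrow> 'a::comm_monoid_add"
  shows "(\<Sum>i\<le>2*k. h i) = (\<Sum>j\<le>k. h (2*j)) + (\<Sum>j<k. h (2*j+1))"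
  by (induction k) (simp_all add: atMost_Suc lessThan_Suc ac_simps)

lemma power_plus_minus_le:
  fixes a y :: real
  shows "(a + y) ^ (2*k) + (a - y) ^ (2*k) \<le> 2 * (a^2 + (2 * real k - 1) * y^2) ^ k"
proof -
  define K where "K = 2 * real k - 1"
  define h where "h i = real (2*k choose i) * (y^i + (-y)^i) * a^(2*k-i)" for i
  have "(a + y) ^ (2*k) + (a - y) ^ (2*k) = (y + a) ^ (2*k) + ((-y) + a) ^ (2*k)"
    by (simp add: add.commute)
  also have "\<dots> = (\<Sum>i\<le>2*k. h i)"
    unfolding binomial_ring h_def by (simp add: sum.distrib[symmetric] algebra_simps)
  also have "\<dots> = (\<Sum>j\<le>k. h (2*j))"
    unfolding sum_atMost_double by (simp add: h_def)
  also have "\<dots> \<le> (\<Sum>j\<le>k. 2 * (real (k choose j) * (K * y^2)^j * (a^2)^(k-j)))"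
  proof (rule sum_mono)
    fix j assume "j \<in> {..k}"
    then have "real (2*k choose 2*j) * ((y^2)^j * (a^2)^(k-j)) \<le> real (k choose j) * K^j * ((y^2)^j * (a^2)^(k-j))"
      using binomial_double_le[of j k] unfolding K_def by (intro mult_right_mono) auto
    moreover have "y^(2*j) = (y^2)^j" "a^(2*k - 2*j) = (a^2)^(k-j)"
      by (simp_all add: power_mult[symmetric] diff_mult_distrib2)
    ultimately show "h (2*j) \<le> 2 * (real (k choose j) * (K * y^2)^j * (a^2)^(k-j))"
      unfolding h_def by (simp add: power_mult_distrib)
  qed
  also have "\<dots> = 2 * (K * y^2 + a^2)^k"
    unfolding binomial_ring by (simp add: sum_distrib_left)
  finally show ?thesis unfolding K_def by (simp add: add.commute)
qed

lemma power_plus_minus_noise_le: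
  fixes a b \<rho> :: real
  assumes "\<rho>^2 * (2 * real k + 1) \<le> 1"
  shows "(a + \<rho> * b) ^ (2 * Suc k) + (a - \<rho> * b) ^ (2 * Suc k) \<le> 2 * (a^2 + b^2) ^ Suc k"
proof -
  have "(2 * real (Suc k) - 1) * (\<rho> * b)^2 = (\<rho>^2 * (2 * real k + 1)) * b^2"
    by (simp add: power_mult_distrib algebra_simps)
  also have "\<dots> \<le> b^2" using assms by (intro mult_left_le_one_le) auto
  finally have "(2 * real (Suc k) - 1) * (\<rho> * b)^2 \<le> b^2" .
  then have "2 * (a^2 + (2 * real (Suc k) - 1) * (\<rho> * b)^2) ^ Suc k \<le> 2 * (a^2 + b^2) ^ Suc k"
    by (intro mult_left_mono power_mono add_left_mono) auto
  with power_plus_minus_le[of a "\<rho> * b" "Suc k"] show ?thesis by simp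
qed

lemma convex_on_power_nonneg: "convex_on {0::real..} (\<lambda>x. x ^ n)"
  by (cases "even n") (auto intro: convex_on_subset[OF convex_power_even] convex_power_odd)

lemma power_add_le_weighted:
  fixes u v A B :: real
  assumes "u \<ge> 0" "v \<ge> 0" "A > 0" "B > 0"
  shows "(u + v) ^ Suc k \<le> (A + B) ^ k * (u ^ Suc k / A ^ k + v ^ Suc k / B ^ k)"
proof -
  define p where "p = A / (A + B)"
  define q where "q = B / (A + B)"
  have pq: "0 < p" "0 < q" "p + q = 1"
    using assms unfolding p_def q_def by (simp_all flip: add_divide_distrib)
  have scale: "r * (w / r) ^ Suc k = w ^ Suc k / r ^ k" if "r > 0" for r w :: real
    using that by (simp add: power_divide field_simps)
  have "(u + v) ^ Suc k = (p * (u / p) + q * (v / q)) ^ Suc k"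
    using pq by simp
  also have "\<dots> \<le> p * (u / p) ^ Suc k + q * (v / q) ^ Suc k"
  proof -
    have "1 - q = p" using pq(3) by simp
    moreover have "((1 - q) * (u / p) + q * (v / q)) ^ Suc k \<le> (1 - q) * (u / p) ^ Suc k + q * (v / q) ^ Suc k"
      using convex_onD[OF convex_on_power_nonneg, of q "u / p" "v / q" "Suc k"] pq assms by simp
    ultimately show ?thesis by simp
  qed
  also have "\<dots> = (A + B) ^ k * (u ^ Suc k / A ^ k + v ^ Suc k / B ^ k)"
    unfolding scale[OF pq(1)] scale[OF pq(2)] using assms
    by (simp add: p_def q_def power_divide field_simps)
  finally show ?thesis .
qed

text \<open>Minkowski's inequality for the \<open>l\<^sup>p\<close>-norms over \<open>X\<close>, in the form of bounds
  \<open>\<parallel>u\<parallel>\<^sub>p\<^sup>p \<le> N A\<^sup>p\<close> and \<open>\<parallel>v\<parallel>\<^sub>p\<^sup>p \<le> N B\<^sup>p\<close>, which avoids taking roots.\<close>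
lemma sum_power_add_le:
  fixes u v :: "'a \<Rightarrow> real"
  assumes "finite X" and u: "\<And>x. x \<in> X \<Longrightarrow> u x \<ge> 0" and v: "\<And>x. x \<in> X \<Longrightarrow> v x \<ge> 0"
    and su: "(\<Sum>x\<in>X. u x ^ Suc k) \<le> N * A ^ Suc k"
    and sv: "(\<Sum>x\<in>X. v x ^ Suc k) \<le> N * B ^ Suc k"
    and "A \<ge> 0" "B \<ge> 0"
  shows "(\<Sum>x\<in>X. (u x + v x) ^ Suc k) \<le> N * (A + B) ^ Suc k"
proof -
  have vanish: "\<forall>x\<in>X. w x = 0"
    if w: "\<And>x. x \<in> X \<Longrightarrow> w x \<ge> 0" and "(\<Sum>x\<in>X. w x ^ Suc k) \<le> 0"
    for w :: "'a \<Rightarrow> real"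
  proof -
    have "(\<Sum>x\<in>X. w x ^ Suc k) = 0" using that by (intro antisym sum_nonneg) auto
    then show ?thesis using w sum_nonneg_eq_0_iff[OF \<open>finite X\<close>, of "\<lambda>x. w x ^ Suc k"] by auto
  qed
  consider "A = 0" | "B = 0" | "A > 0" "B > 0" using assms by linarith
  then show ?thesis
  proof cases
    case 1
    have "\<forall>x\<in>X. u x = 0" by (rule vanish) (use u \<open>A = 0\<close> su in auto)
    then have "(\<Sum>x\<in>X. (u x + v x) ^ Suc k) = (\<Sum>x\<in>X. v x ^ Suc k)" by simp
    then show ?thesis using 1 sv by simp
  next
    case 2
    have "\<forall>x\<in>X. v x = 0" by (rule vanish) (use v \<open>B = 0\<close> sv in auto)
    then have "(\<Sum>x\<in>X. (u x + v x) ^ Suc k) = (\<Sum>x\<in>X. u x ^ Suc k)" by simp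
    then show ?thesis using 2 su by simp
  next
    case 3
    have "(\<Sum>x\<in>X. (u x + v x) ^ Suc k)
        \<le> (\<Sum>x\<in>X. (A + B) ^ k * (u x ^ Suc k / A ^ k + v x ^ Suc k / B ^ k))"
      using 3 by (intro sum_mono power_add_le_weighted u v)
    also have "\<dots> = (A + B) ^ k * ((\<Sum>x\<in>X. u x ^ Suc k) / A ^ k + (\<Sum>x\<in>X. v x ^ Suc k) / B ^ k)"
      by (simp add: sum_distrib_left sum.distrib sum_divide_distrib distrib_left)
    also have "\<dots> \<le> (A + B) ^ k * (N * A ^ Suc k / A ^ k + N * B ^ Suc k / B ^ k)"
      using 3 su sv by (intro mult_left_mono add_mono divide_right_mono) auto
    also have "\<dots> = N * (A + B) ^ Suc k"
      using 3 by (simp add: field_simps)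
    finally show ?thesis .
  qed
qed

lemma sum_Pow_insert:
  assumes "finite I" "i \<notin> I"
  shows "(\<Sum>S\<in>Pow (insert i I). h S) = (\<Sum>S\<in>Pow I. h S) + (\<Sum>S\<in>Pow I. h (insert i S))"
proof -
  have "inj_on (insert i) (Pow I)"
    using assms(2) unfolding inj_on_def by (metis PowD insert_ident subsetD)
  then show ?thesis
    unfolding Pow_insert using assms
    by (subst sum.union_disjoint) (auto simp: sum.reindex)
qed

text \<open>\<open>noisy_poly \<rho> I c\<close> is \<open>T\<^sub>\<rho> f\<close>, the noise operator applied to the function \<open>f\<close> on the
  cube with Fourier coefficients \<open>c\<close>.\<close>
definition noisy_poly :: "real \<Rightarrow> nat set \<Rightarrow> (nat set \<Rightarrow> real) \<Rightarrow> (nat \<Rightarrow> bool) \<Rightarrow> real" where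
  "noisy_poly \<rho> I c x = (\<Sum>S\<in>Pow I. \<rho> ^ card S * c S * character S x)"

lemma noisy_poly_insert:
  assumes "finite I" "i \<notin> I"
  shows "noisy_poly \<rho> (insert i I) c x
    = noisy_poly \<rho> I c x + \<rho> * bool_sign (x i) * noisy_poly \<rho> I (\<lambda>S. c (insert i S)) x"
proof -
  have "\<rho> ^ card (insert i S) * c (insert i S) * character (insert i S) x
      = \<rho> * bool_sign (x i) * (\<rho> ^ card S * c (insert i S) * character S x)" if "S \<in> Pow I" for S
  proof -
    have "finite S" "i \<notin> S" using that assms finite_subset[of S I] by auto
    then show ?thesis by (simp add: character_insert)
  qed
  then have "(\<Sum>S\<in>Pow I. \<rho> ^ card (insert i S) * c (insert i S) * character (insert i S) x)
      = \<rho> * bool_sign (x i) * noisy_poly \<rho> I (\<lambda>S. c (insert i S)) x"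
    unfolding noisy_poly_def sum_distrib_left by (rule sum.cong[OF refl])
  then show ?thesis
    unfolding noisy_poly_def sum_Pow_insert[OF assms] by simp
qed

lemma noisy_poly_upd:
  assumes "i \<notin> I"
  shows "noisy_poly \<rho> I c (x(i := v)) = noisy_poly \<rho> I c x"
proof -
  have "character S (x(i := v)) = character S x" if "S \<in> Pow I" for S
    using that assms by (intro character_upd) auto
  then show ?thesis by (simp add: noisy_poly_def)
qed

theorem Bonami_inequality:
  assumes "finite I" "\<rho>^2 * (2 * real k + 1) \<le> 1"
  shows "(\<Sum>x\<in>cube I. noisy_poly \<rho> I c x ^ (2 * Suc k)) \<le> 2 ^ card I * (\<Sum>S\<in>Pow I. (c S)^2) ^ Suc k"
  using assms(1)
proof (induction I arbitrary: c rule: finite_induct)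
  case empty
  have "c {} ^ (2 * Suc k) = (c {}^2) ^ Suc k" by (rule power_mult)
  then show ?case by (simp add: cube_empty noisy_poly_def character_def del: power_Suc)
next
  case (insert i I)
  define a where "a = noisy_poly \<rho> I c"
  define b where "b = noisy_poly \<rho> I (\<lambda>S. c (insert i S))"
  have "(\<Sum>x\<in>cube (insert i I). noisy_poly \<rho> (insert i I) c x ^ (2 * Suc k))
      = (\<Sum>x\<in>cube I. (a x + \<rho> * b x) ^ (2 * Suc k) + (a x - \<rho> * b x) ^ (2 * Suc k))"
    unfolding sum_cube_insert[OF insert(1,2)] noisy_poly_insert[OF insert(1,2)]
    using insert(2) by (intro sum.cong) (auto simp: a_def b_def noisy_poly_upd bool_sign_def cube_def)
  also have "\<dots> \<le> (\<Sum>x\<in>cube I. 2 * ((a x)^2 + (b x)^2) ^ Suc k)"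
    using power_plus_minus_noise_le[OF assms(2)] by (rule sum_mono)
  also have "\<dots> = 2 * (\<Sum>x\<in>cube I. ((a x)^2 + (b x)^2) ^ Suc k)"
    by (simp add: sum_distrib_left)
  also have "\<dots> \<le> 2 * (2 ^ card I * ((\<Sum>S\<in>Pow I. (c S)^2) + (\<Sum>S\<in>Pow I. (c (insert i S))^2)) ^ Suc k)"
  proof -
    have "(\<Sum>x\<in>cube I. ((a x)^2) ^ Suc k) \<le> 2 ^ card I * (\<Sum>S\<in>Pow I. (c S)^2) ^ Suc k"
      using insert.IH[of c] unfolding a_def power_mult .
    moreover have "(\<Sum>x\<in>cube I. ((b x)^2) ^ Suc k) \<le> 2 ^ card I * (\<Sum>S\<in>Pow I. (c (insert i S))^2) ^ Suc k"
      using insert.IH[of "\<lambda>S. c (insert i S)"] unfolding b_def power_mult .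
    ultimately show ?thesis
      by (intro mult_left_mono sum_power_add_le finite_cube[OF insert(1)]) (auto intro: sum_nonneg)
  qed
  also have "\<dots> = 2 ^ card (insert i I) * (\<Sum>S\<in>Pow (insert i I). (c S)^2) ^ Suc k"
    using insert(1,2) by (simp add: sum_Pow_insert)
  finally show ?case .
qed

section \<open>The level-2 inequality\<close>

text \<open>\<open>char_sum A S\<close> is \<open>2\<^sup>|\<^sup>I\<^sup>|\<close> times the Fourier coefficient at \<open>S\<close> of the indicator of
  \<open>A \<subseteq> cube I\<close>, so \<open>level2_weight E A\<close> is its (scaled) Fourier weight on \<open>E\<close>.\<close>
definition char_sum :: "(nat \<Rightarrow> bool) set \<Rightarrow> nat set \<Rightarrow> real" where
  "char_sum A S = (\<Sum>x\<in>A. character S x)"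

definition level2_weight :: "nat set set \<Rightarrow> (nat \<Rightarrow> bool) set \<Rightarrow> real" where
  "level2_weight E A = (\<Sum>e\<in>E. (char_sum A e)^2)"

lemma level2_weight_nonneg: "level2_weight E A \<ge> 0"
  unfolding level2_weight_def by (simp add: sum_nonneg)

lemma level2_weight_cube:
  assumes "finite I" "E \<subseteq> Pow I" "\<forall>e\<in>E. card e = 2"
  shows "level2_weight E (cube I) = 0"
proof -
  have "char_sum (cube I) e = 0" if "e \<in> E" for e
    unfolding char_sum_def using that assms
    by (intro sum_cube_character_eq_0) (auto simp flip: card_0_eq)
  then show ?thesis by (simp add: level2_weight_def)
qed

lemma degree2_moment_le:
  assumes "finite I" "E \<subseteq> Pow I" "\<forall>e\<in>E. card e = 2"
  shows "(\<Sum>x\<in>cube I. (\<Sum>e\<in>E. F e * character e x) ^ (2 * Suc k))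
    \<le> 2 ^ card I * (1 + 2 * real k) ^ (2 * Suc k) * (\<Sum>e\<in>E. (F e)^2) ^ Suc k"
proof -
  define Q where "Q = 1 + 2 * real k"
  define \<rho> where "\<rho> = 1 / sqrt Q"
  define c where "c S = (if S \<in> E then Q * F S else 0)" for S
  have Q: "Q \<ge> 1" "\<rho>^2 = 1 / Q" unfolding Q_def \<rho>_def by (simp_all add: power_divide)
  have "noisy_poly \<rho> I c x = (\<Sum>e\<in>E. \<rho> ^ card e * c e * character e x)" for x
    unfolding noisy_poly_def using assms by (intro sum.mono_neutral_right) (auto simp: c_def)
  also have "\<dots> x = (\<Sum>e\<in>E. F e * character e x)" for x
    using assms Q by (intro sum.cong) (auto simp: c_def)
  finally have poly: "noisy_poly \<rho> I c x = (\<Sum>e\<in>E. F e * character e x)" for x .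
  have "(\<Sum>S\<in>Pow I. (c S)^2) = (\<Sum>e\<in>E. (c e)^2)"
    using assms by (intro sum.mono_neutral_right) (auto simp: c_def)
  also have "\<dots> = Q^2 * (\<Sum>e\<in>E. (F e)^2)"
    by (simp add: c_def sum_distrib_left power_mult_distrib)
  finally have coeffs: "(\<Sum>S\<in>Pow I. (c S)^2) = Q^2 * (\<Sum>e\<in>E. (F e)^2)" .
  have "\<rho>^2 * (2 * real k + 1) \<le> 1" using Q unfolding Q_def by simp
  from Bonami_inequality[OF assms(1) this, of c]
  have "(\<Sum>x\<in>cube I. (\<Sum>e\<in>E. F e * character e x) ^ (2 * Suc k))
      \<le> 2 ^ card I * (Q^2 * (\<Sum>e\<in>E. (F e)^2)) ^ Suc k"
    unfolding poly coeffs .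
  also have "\<dots> = 2 ^ card I * Q ^ (2 * Suc k) * (\<Sum>e\<in>E. (F e)^2) ^ Suc k"
    by (simp only: power_mult_distrib power_mult mult.assoc)
  finally show ?thesis unfolding Q_def .
qed

lemma young_power:
  fixes t y :: real
  assumes "t > 0" "y \<ge> 0"
  shows "real (Suc m) * t ^ m * y \<le> real m * t ^ Suc m + y ^ Suc m"
proof -
  have "1 + real (Suc m) * (y / t - 1) \<le> (1 + (y / t - 1)) ^ Suc m"
    by (rule Bernoulli_inequality) (use assms in simp)
  also have "\<dots> = y ^ Suc m / t ^ Suc m" using assms by (simp add: power_divide)
  finally have "(1 + real (Suc m) * (y / t - 1)) * t ^ Suc m \<le> y ^ Suc m"
    using assms by (simp add: field_simps)
  moreover have "(1 + real (Suc m) * (y / t - 1)) * t ^ Suc m = real (Suc m) * t ^ m * y - real m * t ^ Suc m"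
    using assms by (simp add: field_simps)
  ultimately show ?thesis by linarith
qed

lemma young_even_power:
  fixes t y :: real
  assumes "t > 0"
  shows "(2 + 2 * real k) * t ^ (2*k+1) * y \<le> (1 + 2 * real k) * t ^ (2 * Suc k) + y ^ (2 * Suc k)"
proof (cases "y \<ge> 0")
  case True
  then show ?thesis using young_power[OF assms True, of "2*k+1"] by simp
next
  case False
  then have "(2 + 2 * real k) * t ^ (2*k+1) * y \<le> 0"
    using assms by (simp add: mult_nonneg_nonpos)
  also have "0 \<le> (1 + 2 * real k) * t ^ (2 * Suc k) + y ^ (2 * Suc k)"
    using assms zero_le_even_power[of "2 * Suc k" y] by (intro add_nonneg_nonneg) auto
  finally show ?thesis .
qed

text \<open>For the degree-2 part \<open>f\<close> of the indicator of \<open>A\<close>, \<open>W = \<Sum>\<^sub>x\<^sub>\<in>\<^sub>A f x\<close>; Young's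
  inequality then trades \<open>\<surd>W\<close> for \<open>|A|\<close> and a high moment of \<open>f / \<surd>W\<close>, which the Bonami
  lemma controls.\<close>
lemma level2_young:
  assumes "finite I" "A \<subseteq> cube I" "E \<subseteq> Pow I" "\<forall>e\<in>E. card e = 2" "t > 0"
  shows "(2 + 2 * real k) * t ^ (2*k+1) * sqrt (level2_weight E A)
    \<le> (1 + 2 * real k) * t ^ (2 * Suc k) * real (card A) + 2 ^ card I * (1 + 2 * real k) ^ (2 * Suc k)"
proof (cases "level2_weight E A = 0")
  case False
  define W where "W = level2_weight E A"
  have W: "W > 0" using False level2_weight_nonneg unfolding W_def by (simp add: order_less_le)
  define f where "f x = (\<Sum>e\<in>E. char_sum A e * character e x)" for x
  define g where "g x = f x / sqrt W" for x
  have "(\<Sum>x\<in>A. f x) = (\<Sum>e\<in>E. char_sum A e * char_sum A e)"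
    unfolding f_def by (subst sum.swap) (simp add: char_sum_def[of A] sum_distrib_left)
  then have "(\<Sum>x\<in>A. g x) = W / sqrt W"
    unfolding g_def sum_divide_distrib[symmetric] by (simp add: W_def level2_weight_def power2_eq_square)
  also have "\<dots> = sqrt W"
    using W by (simp add: real_div_sqrt)
  finally have sum_g: "(\<Sum>x\<in>A. g x) = sqrt W" .
  have "g x ^ (2 * Suc k) = f x ^ (2 * Suc k) / W ^ Suc k" for x
    unfolding g_def power_divide power_mult using W by simp
  then have "(\<Sum>x\<in>cube I. g x ^ (2 * Suc k)) = (\<Sum>x\<in>cube I. f x ^ (2 * Suc k)) / W ^ Suc k"
    by (simp add: sum_divide_distrib)
  also have "\<dots> \<le> 2 ^ card I * (1 + 2 * real k) ^ (2 * Suc k)"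
    using degree2_moment_le[OF assms(1,3,4), of "char_sum A" k] W
    unfolding f_def W_def level2_weight_def by (simp add: divide_le_eq)
  finally have moment: "(\<Sum>x\<in>cube I. g x ^ (2 * Suc k)) \<le> 2 ^ card I * (1 + 2 * real k) ^ (2 * Suc k)" .
  have "(2 + 2 * real k) * t ^ (2*k+1) * sqrt W = (\<Sum>x\<in>A. (2 + 2 * real k) * t ^ (2*k+1) * g x)"
    by (simp add: sum_g flip: sum_distrib_left)
  also have "\<dots> \<le> (\<Sum>x\<in>A. (1 + 2 * real k) * t ^ (2 * Suc k) + g x ^ (2 * Suc k))"
    using young_even_power[OF assms(5)] by (rule sum_mono)
  also have "\<dots> = (1 + 2 * real k) * t ^ (2 * Suc k) * real (card A) + (\<Sum>x\<in>A. g x ^ (2 * Suc k))"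
    by (simp add: sum.distrib)
  also have "(\<Sum>x\<in>A. g x ^ (2 * Suc k)) \<le> (\<Sum>x\<in>cube I. g x ^ (2 * Suc k))"
    using assms(1,2) by (intro sum_mono2 finite_cube zero_le_even_power) auto
  finally show ?thesis using moment unfolding W_def by simp
qed (use assms(5) in \<open>auto intro!: add_nonneg_nonneg mult_nonneg_nonneg\<close>)

lemma sqrt_level2_weight_le_exp:
  assumes I: "finite I" and A: "A \<subseteq> cube I" and E: "E \<subseteq> Pow I" "\<forall>e\<in>E. card e = 2"
    and N: "2 ^ card I \<le> real (card A) * exp 1 ^ (2 * Suc k)"
  shows "sqrt (level2_weight E A) \<le> (1 + 2 * real k) * exp 1 * real (card A)"
proof -
  define a where "a = real (card A)"
  define Q where "Q = 1 + 2 * real k"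
  define X where "X = Q * exp 1"
  define T where "T = X ^ (2*k+1)"
  have Q: "Q \<ge> 1" unfolding Q_def by simp
  have T: "T > 0" unfolding T_def X_def using Q by simp
  have XT: "X ^ (2 * Suc k) = T * X" unfolding T_def by simp
  have "2 ^ card I * Q ^ (2 * Suc k) \<le> a * exp 1 ^ (2 * Suc k) * Q ^ (2 * Suc k)"
    using N Q unfolding a_def by (intro mult_right_mono) auto
  also have "\<dots> = a * X ^ (2 * Suc k)"
    unfolding X_def by (simp add: power_mult_distrib)
  also have "\<dots> = a * T * X"
    unfolding XT by simp
  finally have N_le: "2 ^ card I * Q ^ (2 * Suc k) \<le> a * T * X" .
  have "(2 + 2 * real k) * T * sqrt (level2_weight E A) \<le> Q * (T * X) * a + 2 ^ card I * Q ^ (2 * Suc k)"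
    unfolding XT[symmetric] unfolding T_def Q_def a_def
    by (rule level2_young[OF I A E]) (use Q in \<open>simp add: X_def\<close>)
  also have "\<dots> \<le> (2 + 2 * real k) * T * (Q * exp 1 * a)"
    using N_le unfolding X_def Q_def by (simp add: algebra_simps)
  finally show ?thesis
    using T unfolding Q_def a_def by (simp add: mult_le_cancel_left_pos)
qed

text \<open>The level-2 inequality; the exponent \<open>2k+2 \<approx> ln (2\<^sup>|\<^sup>I\<^sup>| / |A|)\<close> balances the two terms
  of \<open>level2_young\<close>.\<close>
theorem level2_inequality:
  assumes I: "finite I" and A: "A \<subseteq> cube I" "A \<noteq> {}" and E: "E \<subseteq> Pow I" "\<forall>e\<in>E. card e = 2"
  shows "sqrt (level2_weight E A) \<le> exp 1 * real (card A) * (ln (2 ^ card I / real (card A)) + 1)"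
proof -
  define N :: real where "N = 2 ^ card I"
  define a where "a = real (card A)"
  have "finite A" using A I finite_cube finite_subset by blast
  then have a: "0 < a" "a \<le> N"
    using A card_mono[OF finite_cube[OF I] A(1)] card_cube[OF I]
    unfolding a_def N_def by (auto simp: card_gt_0_iff simp flip: of_nat_power)
  define L where "L = ln (N / a)"
  define k where "k = nat \<lfloor>L / 2\<rfloor>"
  have L: "L \<le> 2 * (real k + 1)" "2 * real k \<le> L"
    using a unfolding L_def k_def by (auto simp: of_nat_nat) linarith+
  have "N = a * exp L" unfolding L_def using a by simp
  also have "\<dots> \<le> a * exp (real (2 * Suc k))"
    using L a by simp
  also have "\<dots> = a * exp 1 ^ (2 * Suc k)"
    using exp_of_nat_mult[of "2 * Suc k" "1::real"] by simp
  finally have "sqrt (level2_weight E A) \<le> (1 + 2 * real k) * exp 1 * a"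
    using sqrt_level2_weight_le_exp[OF I A(1) E] unfolding N_def a_def by blast
  also have "\<dots> \<le> (L + 1) * exp 1 * a"
    using L a by (intro mult_right_mono) auto
  finally show ?thesis unfolding L_def a_def N_def by (simp add: algebra_simps)
qed

lemma sqrt_level2_weight_crude_le:
  assumes "finite I" "A \<subseteq> cube I" "E \<subseteq> Pow I" "\<forall>e\<in>E. card e = 2"
  shows "2 * sqrt (level2_weight E A) \<le> real (card A) + 2 ^ card I"
  using level2_young[OF assms, of 1 0] by simp

lemma sum_entropy_le:
  fixes p :: "'a \<Rightarrow> real"
  assumes "finite S" "S \<noteq> {}" "\<And>a. a \<in> S \<Longrightarrow> p a > 0"
  shows "(\<Sum>a\<in>S. p a * ln (sum p S / p a)) \<le> sum p S * ln (real (card S))"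
proof -
  define N where "N = sum p S"
  define K where "K = real (card S)"
  have K: "K > 0" unfolding K_def using assms(1,2) by (simp add: card_gt_0_iff)
  have N: "N > 0" unfolding N_def using assms by (simp add: sum_pos)
  have "p a * ln (N / p a) \<le> N / K - p a + p a * ln K" if a: "a \<in> S" for a
  proof -
    have pa: "p a > 0" using assms(3) a .
    have "ln (N / (p a * K)) \<le> N / (p a * K) - 1"
      using pa K N by (intro ln_le_minus_one) simp
    moreover have "ln (N / p a) = ln (N / (p a * K)) + ln K"
      using pa K N by (simp add: ln_div ln_mult)
    ultimately have "p a * ln (N / p a) \<le> p a * (N / (p a * K) - 1 + ln K)"
      using pa by (intro mult_left_mono) auto
    also have "\<dots> = N / K - p a + p a * ln K" using pa K by (simp add: field_simps)
    finally show ?thesis .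
  qed
  then have "(\<Sum>a\<in>S. p a * ln (N / p a)) \<le> (\<Sum>a\<in>S. N / K - p a + p a * ln K)"
    by (rule sum_mono)
  also have "\<dots> = N * ln K"
    using K by (simp add: N_def K_def sum.distrib sum_subtractf sum_distrib_right[symmetric])
  finally show ?thesis unfolding N_def K_def .
qed

lemma sum_fibres:
  assumes "finite X"
  shows "(\<Sum>a\<in>f ` X. \<Sum>x\<in>{x\<in>X. f x = a}. h x) = (\<Sum>x\<in>X. h x)"
  using sum.group[OF assms finite_imageI[OF assms] subset_refl, where g = f and h = h] by simp

lemma sum_card_fibres:
  "finite X \<Longrightarrow> (\<Sum>a\<in>f ` X. real (card {x\<in>X. f x = a})) = real (card X)"
  using sum_fibres[where f = f and h = "\<lambda>_. 1::real"] by simp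

lemma sum_sqrt_level2_weight_fibres_le_crude:
  fixes f :: "(nat \<Rightarrow> bool) \<Rightarrow> 'a"
  assumes I: "finite I" and E: "E \<subseteq> Pow I" "\<forall>e\<in>E. card e = 2"
  shows "(\<Sum>a\<in>f ` cube I. sqrt (level2_weight E {x\<in>cube I. f x = a}))
    \<le> (1 + real (card (f ` cube I))) * 2 ^ card I / 2"
proof -
  have "(\<Sum>a\<in>f ` cube I. sqrt (level2_weight E {x\<in>cube I. f x = a}))
      \<le> (\<Sum>a\<in>f ` cube I. (real (card {x\<in>cube I. f x = a}) + 2 ^ card I) / 2)"
    using sqrt_level2_weight_crude_le[OF I _ E] by (intro sum_mono) (simp add: mult.commute)
  also have "\<dots> = (1 + real (card (f ` cube I))) * 2 ^ card I / 2"
    using sum_card_fibres[OF finite_cube[OF I], of f] card_cube[OF I]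
    by (simp add: sum.distrib algebra_simps flip: sum_divide_distrib)
  finally show ?thesis .
qed

lemma sum_sqrt_level2_weight_fibres_le_entropy:
  fixes f :: "(nat \<Rightarrow> bool) \<Rightarrow> 'a"
  assumes I: "finite I" and E: "E \<subseteq> Pow I" "\<forall>e\<in>E. card e = 2"
  shows "(\<Sum>a\<in>f ` cube I. sqrt (level2_weight E {x\<in>cube I. f x = a}))
    \<le> exp 1 * 2 ^ card I * (ln (real (card (f ` cube I))) + 1)"
proof -
  define F where "F a = {x\<in>cube I. f x = a}" for a
  define N :: real where "N = 2 ^ card I"
  have fin: "finite (cube I)" "finite (f ` cube I)" using finite_cube[OF I] by simp_all
  have ne: "f ` cube I \<noteq> {}" by (auto simp: cube_def)
  have F: "F a \<subseteq> cube I" for a unfolding F_def by auto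
  have F_ne: "F a \<noteq> {}" if "a \<in> f ` cube I" for a
    using that unfolding F_def by auto
  have F_pos: "0 < real (card (F a))" if "a \<in> f ` cube I" for a
    using F_ne[OF that] finite_subset[OF F fin(1)] by (simp add: card_gt_0_iff)
  have sum_card: "(\<Sum>a\<in>f ` cube I. real (card (F a))) = N"
    using sum_card_fibres[OF fin(1), of f] card_cube[OF I] by (simp add: F_def N_def)
  have "(\<Sum>a\<in>f ` cube I. sqrt (level2_weight E (F a)))
      \<le> (\<Sum>a\<in>f ` cube I. exp 1 * real (card (F a)) * (ln (N / real (card (F a))) + 1))"
    by (rule sum_mono) (use level2_inequality[OF I F F_ne E] in \<open>simp add: N_def\<close>)
  also have "\<dots> = exp 1 * ((\<Sum>a\<in>f ` cube I. real (card (F a)) * ln (N / real (card (F a)))) + N)"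
    by (simp add: sum_card algebra_simps sum.distrib flip: sum_distrib_left)
  also have "\<dots> \<le> exp 1 * (N * ln (real (card (f ` cube I))) + N)"
    using sum_entropy_le[of "f ` cube I" "\<lambda>a. real (card (F a))"] fin(2) F_pos ne
    by (simp add: sum_card)
  finally show ?thesis by (simp add: F_def N_def algebra_simps)
qed

text \<open>For \<open>c \<le> 1\<close> the entropy bound is too weak, and the crude bound (\<open>c = 1\<close>) or the
  vanishing of the level-2 weight of the whole cube (\<open>c = 0\<close>) is used instead.\<close>
lemma sum_sqrt_level2_weight_fibres_le:
  fixes f :: "(nat \<Rightarrow> bool) \<Rightarrow> 'a"
  assumes I: "finite I" and E: "E \<subseteq> Pow I" "\<forall>e\<in>E. card e = 2"
    and c: "card (f ` cube I) \<le> 2 ^ c"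
  shows "(\<Sum>a\<in>f ` cube I. sqrt (level2_weight E {x\<in>cube I. f x = a}))
    \<le> 2 * exp 1 * ln 2 * real c * 2 ^ card I"
proof -
  have fin: "finite (f ` cube I)" using finite_cube[OF I] by simp
  have ln2: "1/2 \<le> ln (2::real)"
    using ln_le_minus_one[of "1/2::real"] by (simp add: ln_div)
  consider "c = 0" | "c = 1" | "c \<ge> 2" by linarith
  then show ?thesis
  proof cases
    case 1
    then have "card (f ` cube I) \<le> Suc 0" using c by simp
    then have "\<forall>a\<in>f ` cube I. \<forall>b\<in>f ` cube I. a = b"
      using card_le_Suc0_iff_eq[OF fin] by blast
    then have "{x\<in>cube I. f x = a} = cube I" if "a \<in> f ` cube I" for a
      using that by blast
    then show ?thesis using 1 level2_weight_cube[OF I E] by simp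
  next
    case 2
    have "2 * (1/2) \<le> exp 1 * ln (2::real)"
      using exp_ge_add_one_self[of "1::real"] ln2 by (intro mult_mono) auto
    then have e_ln2: "3/2 \<le> 2 * (exp 1 * ln (2::real))" by simp
    note sum_sqrt_level2_weight_fibres_le_crude[OF I E, of f]
    also have "(1 + real (card (f ` cube I))) * 2 ^ card I / 2 \<le> 3/2 * 2 ^ card I"
      using c 2 by simp
    also have "\<dots> \<le> 2 * (exp 1 * ln 2) * 2 ^ card I"
      using e_ln2 by (intro mult_right_mono) auto
    finally show ?thesis using 2 by (simp add: mult.assoc)
  next
    case 3
    have "ln (real (card (f ` cube I))) \<le> ln (2 ^ c)"
      using c fin by (intro ln_mono) (auto simp: card_gt_0_iff cube_def simp flip: of_nat_power)
    moreover have "2 * (1/2) \<le> real c * ln 2"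
      using 3 ln2 by (intro mult_mono) auto
    ultimately have "ln (real (card (f ` cube I))) + 1 \<le> 2 * (real c * ln 2)"
      by (simp add: ln_realpow)
    then have "exp 1 * 2 ^ card I * (ln (real (card (f ` cube I))) + 1)
        \<le> exp 1 * 2 ^ card I * (2 * (real c * ln 2))"
      by (intro mult_left_mono) auto
    with sum_sqrt_level2_weight_fibres_le_entropy[OF I E, of f] show ?thesis
      by (simp add: algebra_simps)
  qed
qed

section \<open>Matchings\<close>

lemma edges_on_eq: "edges_on n = {e. e \<subseteq> {1..n} \<and> card e = 2}"
  unfolding edges_on_def by (auto simp: card_2_iff) blast+

lemma finite_edges_on: "finite (edges_on n)"
  unfolding edges_on_eq by (rule finite_subset[of _ "Pow {1..n}"]) auto

lemma card_edges_on: "card (edges_on n) = n choose 2"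
  unfolding edges_on_eq using n_subsets[of "{1..n}" 2] by simp

lemma finite_matchings: "finite (matchings n m)"
  by (rule finite_subset[of _ "Pow (edges_on n)"]) (auto simp: matchings_def finite_edges_on)

lemma matchings_nonempty:
  assumes "2 * m \<le> n"
  shows "matchings n m \<noteq> {}"
proof -
  define M where "M = (\<lambda>k. {2*k+1, 2*k+2}) ` {..<m}"
  have "inj_on (\<lambda>k. {2*k+1, 2*k+2}) {..<m}"
    unfolding inj_on_def by (auto simp: doubleton_eq_iff)
  then have "card M = m" unfolding M_def by (simp add: card_image)
  moreover have "M \<subseteq> edges_on n"
    unfolding M_def edges_on_eq using assms by auto
  moreover have "pairwise disjnt M"
    unfolding M_def pairwise_def disjnt_def by auto presburger+
  ultimately have "M \<in> matchings n m" unfolding matchings_def M_def by blast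
  then show ?thesis by blast
qed

lemma image_matching:
  assumes M: "M \<in> matchings n m" and "inj \<pi>" and "\<pi> ` {1..n} \<subseteq> {1..n}"
  shows "image \<pi> ` M \<in> matchings n m"
proof -
  have "inj (image \<pi>)" using \<open>inj \<pi>\<close> by (simp add: inj_image_eq_iff inj_def)
  then have "card (image \<pi> ` M) = m"
    using M by (simp add: matchings_def card_image inj_on_subset)
  moreover have "image \<pi> ` M \<subseteq> edges_on n"
    using M assms(2,3) by (fastforce simp: matchings_def edges_on_eq card_image inj_on_subset)
  moreover have "pairwise disjnt (image \<pi> ` M)"
  proof (unfold pairwise_def, intro ballI impI)
    fix X Y assume "X \<in> image \<pi> ` M" "Y \<in> image \<pi> ` M" "X \<noteq> Y"
    then obtain x y where "x \<in> M" "y \<in> M" "x \<noteq> y" "X = \<pi> ` x" "Y = \<pi> ` y" by blast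
    then show "disjnt X Y"
      using M \<open>inj \<pi>\<close> by (auto simp: matchings_def pairwise_def disjnt_def simp flip: image_Int)
  qed
  ultimately show ?thesis using M by (simp add: matchings_def)
qed

text \<open>Any edge can be moved to any other by a permutation of \<open>[n]\<close>, so all edges lie in
  equally many matchings.\<close>
lemma card_matchings_containing_le:
  assumes e: "e \<in> edges_on n" and e': "e' \<in> edges_on n"
  shows "card {M \<in> matchings n m. e \<in> M} \<le> card {M \<in> matchings n m. e' \<in> M}"
proof -
  obtain i j where ij: "i \<in> {1..n}" "j \<in> {1..n}" "i \<noteq> j" "e = {i, j}"
    using e unfolding edges_on_def by blast
  obtain i' j' where ij': "i' \<in> {1..n}" "j' \<in> {1..n}" "i' \<noteq> j'" "e' = {i', j'}"
    using e' unfolding edges_on_def by blast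
  define \<pi> where "\<pi> = Transposition.transpose (Transposition.transpose i i' j) j' \<circ> Transposition.transpose i i'"
  have inj: "inj \<pi>" unfolding \<pi>_def by (simp add: inj_compose)
  have "\<pi> ` {1..n} \<subseteq> {1..n}"
    using ij ij' unfolding \<pi>_def by (auto simp: Transposition.transpose_def)
  moreover have "\<pi> ` e = e'"
    using ij ij' unfolding \<pi>_def by (auto simp: Transposition.transpose_def)
  ultimately have "image (image \<pi>) ` {M \<in> matchings n m. e \<in> M} \<subseteq> {M \<in> matchings n m. e' \<in> M}"
    using image_matching[OF _ inj] by auto
  moreover have "inj (image (image \<pi>))"
    using inj by (simp add: inj_image_eq_iff inj_def)
  ultimately show ?thesis
    by (intro card_inj_on_le[where f = "image (image \<pi>)"]) (use finite_matchings in \<open>auto intro: inj_on_subset\<close>)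
qed

lemma sum_matchings_sum_edges:
  fixes h :: "nat set \<Rightarrow> real"
  shows "(\<Sum>M\<in>matchings n m. \<Sum>e\<in>M. h e)
    = (\<Sum>e\<in>edges_on n. real (card {M \<in> matchings n m. e \<in> M}) * h e)"
proof -
  have "(\<Sum>M\<in>matchings n m. \<Sum>e\<in>M. h e) = (\<Sum>M\<in>matchings n m. \<Sum>e\<in>{e\<in>edges_on n. e \<in> M}. h e)"
    by (intro sum.cong refl arg_cong[where f = "\<lambda>A. sum h A"]) (auto simp: matchings_def)
  also have "\<dots> = (\<Sum>e\<in>edges_on n. \<Sum>M\<in>{M\<in>matchings n m. e \<in> M}. h e)"
    using finite_matchings finite_edges_on by (rule sum.swap_restrict)
  finally show ?thesis by simp
qed

lemma card_matchings_containing: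
  assumes "e \<in> edges_on n"
  shows "real (card {M \<in> matchings n m. e \<in> M}) * real (n choose 2) = real m * real (card (matchings n m))"
proof -
  have "card {M \<in> matchings n m. e' \<in> M} = card {M \<in> matchings n m. e \<in> M}" if "e' \<in> edges_on n" for e'
    using card_matchings_containing_le[where m = m, OF assms that]
      card_matchings_containing_le[where m = m, OF that assms] by simp
  then have "(\<Sum>e'\<in>edges_on n. real (card {M \<in> matchings n m. e' \<in> M}))
      = real (card {M \<in> matchings n m. e \<in> M}) * real (n choose 2)"
    by (simp add: card_edges_on)
  also have "(\<Sum>e'\<in>edges_on n. real (card {M \<in> matchings n m. e' \<in> M}))
      = (\<Sum>M\<in>matchings n m. real (card M))"
    using sum_matchings_sum_edges[of "\<lambda>_. 1" n m] by simp
  also have "\<dots> = real m * real (card (matchings n m))"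
    by (simp add: matchings_def)
  finally show ?thesis by simp
qed

text \<open>Bound each term by the \<open>l\<^sup>2\<close>-norm of \<open>F\<close> on \<open>M\<close>, apply Cauchy--Schwarz over the
  matchings, and use that every edge lies in the fraction \<open>m / (n choose 2)\<close> of them.\<close>
lemma sum_abs_matching_edge_le:
  fixes F :: "nat set \<Rightarrow> real" and ed :: "nat set set \<Rightarrow> nat set"
  assumes "2 \<le> n" and ed: "\<And>M. M \<in> matchings n m \<Longrightarrow> ed M \<in> M"
  shows "(\<Sum>M\<in>matchings n m. \<bar>F (ed M)\<bar>)
    \<le> real (card (matchings n m)) * sqrt (real m / real (n choose 2)) * sqrt (\<Sum>e\<in>edges_on n. (F e)^2)"
proof -
  define Ms where "Ms = matchings n m"
  define s where "s M = sqrt (\<Sum>e\<in>M. (F e)^2)" for M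
  have C: "real (n choose 2) > 0" using assms(1) by simp
  have "\<bar>F (ed M)\<bar> \<le> s M" if "M \<in> Ms" for M
  proof -
    have "(F (ed M))^2 \<le> (\<Sum>e\<in>M. (F e)^2)"
      using that ed by (intro member_le_sum) (auto simp: Ms_def matchings_def)
    then show ?thesis unfolding s_def by (metis real_sqrt_abs real_sqrt_le_mono)
  qed
  then have "(\<Sum>M\<in>Ms. \<bar>F (ed M)\<bar>) \<le> (\<Sum>M\<in>Ms. s M)" by (rule sum_mono)
  also have "\<dots> \<le> sqrt ((\<Sum>M\<in>Ms. (s M)^2) * real (card Ms))"
    using Cauchy_Schwarz_ineq_sum[of s "\<lambda>_. 1" Ms] by (intro real_le_rsqrt) simp
  also have "(\<Sum>M\<in>Ms. (s M)^2) = (\<Sum>M\<in>Ms. \<Sum>e\<in>M. (F e)^2)"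
    unfolding s_def by (simp add: sum_nonneg)
  also have "\<dots> = (\<Sum>e\<in>edges_on n. real m * real (card Ms) / real (n choose 2) * (F e)^2)"
    unfolding Ms_def sum_matchings_sum_edges
    using card_matchings_containing C by (intro sum.cong refl) (simp add: field_simps)
  also have "\<dots> = real m * real (card Ms) / real (n choose 2) * (\<Sum>e\<in>edges_on n. (F e)^2)"
    by (simp add: sum_distrib_left)
  also have "sqrt (\<dots> * real (card Ms))
      = sqrt ((real (card Ms))^2 * (real m / real (n choose 2)) * (\<Sum>e\<in>edges_on n. (F e)^2))"
    by (simp add: power2_eq_square algebra_simps)
  also have "\<dots> = real (card Ms) * sqrt (real m / real (n choose 2)) * sqrt (\<Sum>e\<in>edges_on n. (F e)^2)"
    by (simp only: real_sqrt_mult real_sqrt_abs abs_of_nat)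
  finally show ?thesis unfolding Ms_def .
qed

section \<open>One-way protocols\<close>

lemma card_wrong_parity:
  assumes "finite A" "i \<noteq> j"
  shows "2 * real (card {x\<in>A. b \<noteq> (x i \<noteq> x j)}) = real (card A) - bool_sign b * char_sum A {i, j}"
proof -
  have "2 * (if b \<noteq> (x i \<noteq> x j) then 1 else 0) = 1 - bool_sign b * character {i, j} x" for x
    using assms(2) by (auto simp: character_def bool_sign_def)
  then have "(\<Sum>x\<in>A. 2 * (if b \<noteq> (x i \<noteq> x j) then 1 else 0)) = (\<Sum>x\<in>A. 1 - bool_sign b * character {i, j} x)"
    by simp
  then show ?thesis
    using assms(1) by (simp add: sum.If_cases sum_subtractf char_sum_def Int_def flip: sum_distrib_left)
qed

lemma sum_card_wrong_parity_ge:
  fixes g :: "nat set set \<Rightarrow> nat \<times> nat \<times> bool"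
  assumes "finite A" "2 \<le> n" and g: "\<forall>M\<in>matchings n m. case g M of (i, j, b) \<Rightarrow> {i, j} \<in> M"
  shows "real (card (matchings n m))
      * (real (card A) - sqrt (real m / real (n choose 2)) * sqrt (level2_weight (edges_on n) A))
    \<le> 2 * (\<Sum>M\<in>matchings n m. real (card {x\<in>A. case g M of (i, j, b) \<Rightarrow> b \<noteq> (x i \<noteq> x j)}))"
proof -
  define ed where "ed M = (case g M of (i, j, b) \<Rightarrow> {i, j})" for M
  have per_M: "ed M \<in> M \<and> real (card A) - \<bar>char_sum A (ed M)\<bar>
      \<le> 2 * real (card {x\<in>A. case g M of (i, j, b) \<Rightarrow> b \<noteq> (x i \<noteq> x j)})"
    if M: "M \<in> matchings n m" for M
  proof -
    obtain i j b where gM: "g M = (i, j, b)" by (cases "g M")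
    have "{i, j} \<in> M" using g M gM by auto
    then have "i \<noteq> j" using M by (auto simp: matchings_def edges_on_eq)
    moreover have "bool_sign b * char_sum A {i, j} \<le> \<bar>char_sum A {i, j}\<bar>"
      by (auto simp: bool_sign_def)
    ultimately show ?thesis
      using card_wrong_parity[OF assms(1), of i j b] \<open>{i, j} \<in> M\<close> gM by (simp add: ed_def)
  qed
  have "real (card (matchings n m))
      * (real (card A) - sqrt (real m / real (n choose 2)) * sqrt (level2_weight (edges_on n) A))
    \<le> (\<Sum>M\<in>matchings n m. real (card A) - \<bar>char_sum A (ed M)\<bar>)"
    using sum_abs_matching_edge_le[OF assms(2), of m ed "char_sum A"] per_M
    by (simp add: sum_subtractf level2_weight_def algebra_simps)
  also have "\<dots> \<le> 2 * (\<Sum>M\<in>matchings n m. real (card {x\<in>A. case g M of (i, j, b) \<Rightarrow> b \<noteq> (x i \<noteq> x j)}))"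
    unfolding sum_distrib_left using per_M by (intro sum_mono) auto
  finally show ?thesis .
qed

lemma sum_card_filter_swap:
  "finite A \<Longrightarrow> finite B \<Longrightarrow> (\<Sum>y\<in>B. card {x\<in>A. R x y}) = (\<Sum>x\<in>A. card {y\<in>B. R x y})"
  using sum.swap_restrict[of B A "\<lambda>_ _. 1::nat" "\<lambda>y x. R x y"] by simp

lemma card_product_filter_fibres:
  assumes "finite B" "finite C"
  shows "card {(x, y) \<in> B \<times> C. R (f x) x y} = (\<Sum>a\<in>f ` B. \<Sum>y\<in>C. card {x\<in>B. f x = a \<and> R a x y})"
proof -
  have "card {(x, y) \<in> B \<times> C. R (f x) x y} = card (SIGMA x:B. {y\<in>C. R (f x) x y})"
    by (rule arg_cong[where f = card]) auto
  also have "\<dots> = (\<Sum>x\<in>B. card {y\<in>C. R (f x) x y})"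
    using assms by (simp add: card_SigmaI)
  also have "\<dots> = (\<Sum>a\<in>f ` B. \<Sum>x\<in>{x\<in>B. f x = a}. card {y\<in>C. R (f x) x y})"
    by (rule sum_fibres[OF assms(1), symmetric])
  also have "\<dots> = (\<Sum>a\<in>f ` B. \<Sum>x\<in>{x\<in>B. f x = a}. card {y\<in>C. R a x y})"
    by (intro sum.cong refl) auto
  also have "\<dots> = (\<Sum>a\<in>f ` B. \<Sum>y\<in>C. card {x\<in>B. f x = a \<and> R a x y})"
  proof (intro sum.cong refl)
    fix a
    show "(\<Sum>x\<in>{x\<in>B. f x = a}. card {y\<in>C. R a x y}) = (\<Sum>y\<in>C. card {x\<in>B. f x = a \<and> R a x y})"
      using sum_card_filter_swap[of "{x\<in>B. f x = a}" C "R a"] assms by (simp add: conj_assoc)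
  qed
  finally show ?thesis .
qed

lemma card_protocol_errors_ge:
  fixes f :: "(nat \<Rightarrow> bool) \<Rightarrow> 'm" and D :: "'m \<Rightarrow> nat set set \<Rightarrow> nat \<times> nat \<times> bool"
  assumes "2 \<le> n"
    and D: "\<forall>x\<in>bitstrings n. \<forall>M\<in>matchings n m. case D (f x) M of (i, j, b) \<Rightarrow> {i, j} \<in> M"
  shows "real (card (matchings n m)) * (2 ^ n - sqrt (real m / real (n choose 2))
      * (\<Sum>a\<in>f ` bitstrings n. sqrt (level2_weight (edges_on n) {x\<in>bitstrings n. f x = a})))
    \<le> 2 * real (card {(x, M) \<in> bitstrings n \<times> matchings n m. case D (f x) M of (i, j, b) \<Rightarrow> b \<noteq> (x i \<noteq> x j)})"
proof -
  define B where "B = bitstrings n"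
  define Ms where "Ms = matchings n m"
  define F where "F a = {x\<in>B. f x = a}" for a
  define wrong where "wrong a x M = (case D a M of (i, j, b) \<Rightarrow> b \<noteq> (x i \<noteq> x j))"
    for a and x :: "nat \<Rightarrow> bool" and M
  define s where "s = sqrt (real m / real (n choose 2))"
  have B: "finite B" "card B = 2 ^ n"
    unfolding B_def bitstrings_eq_cube by (simp_all add: finite_cube card_cube)
  have "real (card Ms) * (real (card (F a)) - s * sqrt (level2_weight (edges_on n) (F a)))
      \<le> 2 * (\<Sum>M\<in>Ms. real (card {x\<in>F a. wrong a x M}))" if a: "a \<in> f ` B" for a
  proof -
    obtain x where x: "x \<in> B" "f x = a" using a by blast
    have "\<forall>M\<in>Ms. case D (f x) M of (i, j, b) \<Rightarrow> {i, j} \<in> M"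
      using D x(1) unfolding B_def Ms_def by (rule bspec)
    then show ?thesis
      using sum_card_wrong_parity_ge[OF _ assms(1), of "F a" m "D a"] B(1) x(2)
      unfolding s_def Ms_def wrong_def by (simp add: F_def)
  qed
  then have "(\<Sum>a\<in>f ` B. real (card Ms) * (real (card (F a)) - s * sqrt (level2_weight (edges_on n) (F a))))
      \<le> (\<Sum>a\<in>f ` B. 2 * (\<Sum>M\<in>Ms. real (card {x\<in>F a. wrong a x M})))"
    by (rule sum_mono)
  then have "real (card Ms) * (real (card B) - s * (\<Sum>a\<in>f ` B. sqrt (level2_weight (edges_on n) (F a))))
      \<le> 2 * (\<Sum>a\<in>f ` B. \<Sum>M\<in>Ms. real (card {x\<in>F a. wrong a x M}))"
    using sum_card_fibres[OF B(1), of f]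
    by (simp add: F_def right_diff_distrib sum_subtractf flip: sum_distrib_left)
  also have "(\<Sum>a\<in>f ` B. \<Sum>M\<in>Ms. real (card {x\<in>F a. wrong a x M}))
      = real (card {(x, M) \<in> B \<times> Ms. wrong (f x) x M})"
    using card_product_filter_fibres[OF B(1) finite_matchings, where R = wrong and f = f]
    by (simp add: F_def Ms_def flip: of_nat_sum)
  finally show ?thesis
    using B(2) unfolding s_def F_def B_def Ms_def wrong_def by simp
qed

lemma exists_outcome_in_few_events:
  assumes "prob_space P" "finite X"
    and "\<And>i. i \<in> X \<Longrightarrow> Ev i \<in> sets P" "\<And>i. i \<in> X \<Longrightarrow> measure P (Ev i) \<le> \<epsilon>"
  shows "\<exists>r\<in>space P. real (card {i\<in>X. r \<in> Ev i}) \<le> \<epsilon> * real (card X)"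
proof (rule ccontr)
  interpret prob_space P by fact
  define N where "N r = (\<Sum>i\<in>X. indicator (Ev i) r :: real)" for r
  have N: "N r = real (card {i\<in>X. r \<in> Ev i})" for r
    unfolding N_def using assms(2) by (simp add: indicator_def sum.If_cases Int_def)
  have int: "integrable P N"
    unfolding N_def using assms(3) by (intro Bochner_Integration.integrable_sum integrable_real_indicator) (auto simp: emeasure_eq_measure)
  assume "\<not> ?thesis"
  then have "AE r in P. \<epsilon> * real (card X) < N r" by (auto simp: N not_le)
  then have "\<epsilon> * real (card X) < expectation N"
    using integral_less_AE_space[OF integrable_const int] by (simp add: prob_space emeasure_space_1)
  also have "expectation N = (\<Sum>i\<in>X. prob (Ev i))"
    unfolding N_def using assms(3)
    by (subst Bochner_Integration.integral_sum) (auto simp: emeasure_eq_measure)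
  also have "\<dots> \<le> \<epsilon> * real (card X)"
    using sum_mono[of X "\<lambda>i. prob (Ev i)" "\<lambda>_. \<epsilon>"] assms(4) by (simp add: mult.commute)
  finally show False by simp
qed

lemma real_choose_two: "real (n choose 2) = real n * (real n - 1) / 2"
  by (induction n) (simp_all add: numeral_2_eq_2 field_simps)

lemma matching_protocol_advantage_le:
  fixes f :: "(nat \<Rightarrow> bool) \<Rightarrow> 'm" and D :: "'m \<Rightarrow> nat set set \<Rightarrow> nat \<times> nat \<times> bool"
  assumes "2 * m \<le> n" "0 < m" "card (f ` bitstrings n) \<le> 2 ^ c"
    and D: "\<forall>x\<in>bitstrings n. \<forall>M\<in>matchings n m. case D (f x) M of (i, j, b) \<Rightarrow> {i, j} \<in> M"
    and errors: "real (card {(x, M) \<in> bitstrings n \<times> matchings n m. case D (f x) M of (i, j, b) \<Rightarrow> b \<noteq> (x i \<noteq> x j)})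
      \<le> \<epsilon> * real (card (bitstrings n \<times> matchings n m))"
  shows "1/2 - \<epsilon> \<le> exp 1 * ln 2 * real c * sqrt (real m / real (n choose 2))"
proof -
  define s where "s = sqrt (real m / real (n choose 2))"
  define S where "S = (\<Sum>a\<in>f ` bitstrings n. sqrt (level2_weight (edges_on n) {x\<in>bitstrings n. f x = a}))"
  have n: "2 \<le> n" using assms(1,2) by linarith
  have Ms: "0 < card (matchings n m)"
    using matchings_nonempty[OF assms(1)] finite_matchings by (simp add: card_gt_0_iff)
  have B: "card (bitstrings n) = 2 ^ n"
    by (simp add: bitstrings_eq_cube card_cube)
  have "real (card (matchings n m)) * (2 ^ n - s * S) \<le> real (card (matchings n m)) * (2 * \<epsilon> * 2 ^ n)"
    using card_protocol_errors_ge[OF n D] errors unfolding s_def S_def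
    by (simp add: B card_cartesian_product algebra_simps)
  then have "2 ^ n - s * S \<le> 2 * \<epsilon> * 2 ^ n"
    using Ms by (simp only: mult_le_cancel_left_pos of_nat_0_less_iff)
  then have "(1 - 2 * \<epsilon>) * 2 ^ n \<le> s * S"
    by (simp add: algebra_simps)
  also have "\<dots> \<le> s * (2 * exp 1 * ln 2 * real c * 2 ^ n)"
  proof -
    have "edges_on n \<subseteq> Pow {1..n}" "\<forall>e\<in>edges_on n. card e = 2"
      by (auto simp: edges_on_eq)
    from sum_sqrt_level2_weight_fibres_le[OF _ this, of f c] assms(3)
    have "S \<le> 2 * exp 1 * ln 2 * real c * 2 ^ n"
      unfolding S_def bitstrings_eq_cube by simp
    then show ?thesis by (rule mult_left_mono) (simp add: s_def)
  qed
  finally have "(1/2 - \<epsilon>) * (2 * 2 ^ n) \<le> (exp 1 * ln 2 * real c * s) * (2 * 2 ^ n)"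
    by (simp add: algebra_simps)
  then show ?thesis
    unfolding s_def by (rule mult_right_le_imp_le) simp
qed

theorem mainTheorem3:
  fixes n m c :: nat and \<alpha> \<epsilon> :: real
    and P :: "'r measure"
    and MS :: "'m set"
    and enc :: "'r \<Rightarrow> (nat \<Rightarrow> bool) \<Rightarrow> 'm"
    and dec :: "'r \<Rightarrow> 'm \<Rightarrow> nat set set \<Rightarrow> nat \<times> nat \<times> bool"
  assumes "even n"
    and "0 < \<alpha>" and "\<alpha> \<le> 1/4"
    and "m > 0" and "real m = \<alpha> * real n"
    and "0 \<le> \<epsilon>" and "\<epsilon> < 1/2"
    and "prob_space P"
    and "finite MS" and "card MS \<le> 2 ^ c"
    and "\<forall>r \<in> space P. \<forall>x \<in> bitstrings n. enc r x \<in> MS"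
    and "\<forall>r \<in> space P. \<forall>x \<in> bitstrings n. \<forall>M \<in> matchings n m.
           (case dec r (enc r x) M of (i, j, b) \<Rightarrow> {i, j} \<in> M)"
    and "\<forall>x \<in> bitstrings n. \<forall>M \<in> matchings n m.
           {r \<in> space P. case dec r (enc r x) M of (i, j, b) \<Rightarrow> b \<noteq> (x i \<noteq> x j)} \<in> sets P
         \<and> measure P {r \<in> space P. case dec r (enc r x) M of (i, j, b) \<Rightarrow> b \<noteq> (x i \<noteq> x j)} \<le> \<epsilon>"
  shows "real c \<ge> 1 / (exp 1 * ln 2) * (1/2 - \<epsilon>) * sqrt ((real n - 1) / (2 * \<alpha>))"
proof -
  define X where "X = bitstrings n \<times> matchings n m"
  define wrong where "wrong r x M = (case dec r (enc r x) M of (i, j, b) \<Rightarrow> b \<noteq> (x i \<noteq> x j))"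
    for r x M
  define Ev where "Ev p = {r \<in> space P. wrong r (fst p) (snd p)}" for p
  have "real m * 4 \<le> real n" using assms(3,5) mult_right_mono[OF assms(3), of "real n"] by simp
  then have n: "2 * m \<le> n" "2 \<le> n" using assms(4) by linarith+
  have "finite X" unfolding X_def by (simp add: bitstrings_eq_cube finite_cube finite_matchings)
  moreover have "Ev p \<in> sets P" "measure P (Ev p) \<le> \<epsilon>" if "p \<in> X" for p
    using assms(13) that unfolding X_def Ev_def wrong_def by auto
  ultimately obtain r where r: "r \<in> space P" and "real (card {p\<in>X. r \<in> Ev p}) \<le> \<epsilon> * real (card X)"
    using exists_outcome_in_few_events[OF assms(8), where X = X and Ev = Ev and \<epsilon> = \<epsilon>] by blast
  moreover have "{p\<in>X. r \<in> Ev p} = {(x, M) \<in> X. wrong r x M}"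
    using r unfolding Ev_def by auto
  moreover have "card (enc r ` bitstrings n) \<le> 2 ^ c"
    using card_mono[OF assms(9)] assms(10,11) r by (meson image_subsetI order_trans)
  ultimately have "1/2 - \<epsilon> \<le> exp 1 * ln 2 * real c * sqrt (real m / real (n choose 2))"
    using matching_protocol_advantage_le[OF n(1) assms(4), of "enc r" c "dec r" \<epsilon>] assms(12)
    unfolding X_def wrong_def by auto
  moreover have "real m / real (n choose 2) = 2 * \<alpha> / (real n - 1)"
    using n(2) assms(2) unfolding real_choose_two assms(5) by (simp add: field_simps)
  ultimately show ?thesis
    using n(2) assms(2) by (simp add: real_sqrt_divide field_simps)
qed

end
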